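(* Let $B$ be a crystal, $b\in B$ and $b_\mu\in B_S$ such that $\mathrm{wt}(b)+\mathrm{wt}(b_\mu)\in P_+$. Then for every sequence $i_1,\dots,i_r\in\{1,\dots,n\}$, $\tilde e_{i_r}\cdots\tilde e_{i_1}b_\mu\ne0$ implies $\tilde f_{i_r}\cdots\tilde f_{i_1}b\neq0$.
   Context: Let $\mathfrak g$ be of type $D_n$, weights $(\lambda_1,\dots,\lambda_n)$ in an orthonormal basis $\epsilon_j$, simple roots $\alpha_j=\epsilon_j-\epsilon_{j+1}$ ($j<n$), $\alpha_n=\epsilon_{n-1}+\epsilon_n$, $P_+$ the dominant integral weights ($\lambda_j\in\frac12\mathbb Z$, $\lambda_j-\lambda_k\in\mathbb Z$, $\lambda_1\ge\dots\ge\lambda_n$, $\lambda_{n-1}+\lambda_n\ge0$). A crystal means a normal crystal whose connected components are Kashiwara crystals $B_\lambda$ of irreducible $U_q(\mathfrak g)$-modules; in particular $\varepsilon_i(b)=\max\{k:\tilde e_i^kb\ne0\}$, $\varphi_i(b)=\max\{k:\tilde f_i^kb\ne0\}$ and $\varphi_i(b)-\varepsilon_i(b)=\langle\mathrm{wt}(b),\alpha_i^\vee\rangle$. The spinor crystal $B_S$: sign vectors $(i_1,\dots,i_n)$ of weight $\frac12\sum i_j\epsilon_j$; for $j<n$, $\tilde f_j$ turns $(i_j,i_{j+1})=(+,-)$ into $(-,+)$ (else $0$), $\tilde e_j$ the reverse; $\tilde f_n$ turns $(i_{n-1},i_n)=(+,+)$ into $(-,-)$ (else $0$), $\tilde e_n$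 the reverse. *)

theory Defs
  imports Main "HOL.Rat"
begin

text \<open>Weights are functions nat => rat; only the coordinates 1..n are meaningful
  (coordinate j is the coefficient of epsilon_j).  The operators e_i, f_i return
  None for the symbol 0.\<close>

record 'b crystal =
  cr_carrier :: "'b set"
  cr_wt :: "'b \<Rightarrow> nat \<Rightarrow> rat"
  cr_e :: "nat \<Rightarrow> 'b \<Rightarrow> 'b option"
  cr_f :: "nat \<Rightarrow> 'b \<Rightarrow> 'b option"

text \<open>A sign vector (i_1,...,i_n) is a bool list of length n, True = +, with i_j = s!(j-1).\<close>

definition spin_f :: "nat \<Rightarrow> nat \<Rightarrow> bool list \<Rightarrow> bool list option" where
  "spin_f n i s =
     (if 1 \<le> i \<and> i < n then
        (if s!(i-1) \<and> \<not> s!i then Some (s[i-1 := False, i := True]) else None)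
      else if i = n then
        (if s!(n-2) \<and> s!(n-1) then Some (s[n-2 := False, n-1 := False]) else None)
      else None)"

definition spin_e :: "nat \<Rightarrow> nat \<Rightarrow> bool list \<Rightarrow> bool list option" where
  "spin_e n i s =
     (if 1 \<le> i \<and> i < n then
        (if \<not> s!(i-1) \<and> s!i then Some (s[i-1 := True, i := False]) else None)
      else if i = n then
        (if \<not> s!(n-2) \<and> \<not> s!(n-1) then Some (s[n-2 := True, n-1 := True]) else None)
      else None)"

definition spin_wt :: "nat \<Rightarrow> bool list \<Rightarrow> nat \<Rightarrow> rat" where
  "spin_wt n s j = (if 1 \<le> j \<and> j \<le> n then (if s!(j-1) then 1/2 else -1/2) else 0)"

definition spinor_crystal :: "nat \<Rightarrow> bool list crystal" where
  "spinor_crystal n = \<lparr> cr_carrier = {s. length s = n}, cr_wt = spin_wt n,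
                        cr_e = spin_e n, cr_f = spin_f n \<rparr>"

text \<open>Each spinor factor has epsilon_i + phi_i <= 1, so it contributes the signature
  -1 (epsilon_i = 1), +1 (phi_i = 1) or 0.  Cancelling (+,-) pairs, f_i acts on the
  leftmost uncancelled +, e_i on the rightmost uncancelled -.\<close>

definition spin_sig :: "nat \<Rightarrow> nat \<Rightarrow> bool list \<Rightarrow> int" where
  "spin_sig n i s = (if spin_e n i s \<noteq> None then -1 else if spin_f n i s \<noteq> None then 1 else 0)"

definition tens_f :: "nat \<Rightarrow> nat \<Rightarrow> bool list list \<Rightarrow> bool list list option" where
  "tens_f n i w =
     (let \<sigma> = (\<lambda>j. spin_sig n i (w!j));
          J = {j. j < length w \<and> \<sigma> j = 1 \<and>
                   (\<forall>q. j \<le> q \<and> q < length w \<longrightarrow> (\<Sum>m=j..q. \<sigma> m) > 0)}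
      in if J = {} then None
         else Some (w[Min J := the (spin_f n i (w!(Min J)))]))"

definition tens_e :: "nat \<Rightarrow> nat \<Rightarrow> bool list list \<Rightarrow> bool list list option" where
  "tens_e n i w =
     (let \<sigma> = (\<lambda>j. spin_sig n i (w!j));
          J = {j. j < length w \<and> \<sigma> j = -1 \<and>
                   (\<forall>q. q \<le> j \<longrightarrow> (\<Sum>m=q..j. \<sigma> m) < 0)}
      in if J = {} then None
         else Some (w[Max J := the (spin_e n i (w!(Max J)))]))"

definition tens_wt :: "nat \<Rightarrow> bool list list \<Rightarrow> nat \<Rightarrow> rat" where
  "tens_wt n w j = (\<Sum>s\<leftarrow>w. spin_wt n s j)"

definition spinor_tensor_power :: "nat \<Rightarrow> nat \<Rightarrow> bool list list crystal" where
  "spinor_tensor_power n k =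
     \<lparr> cr_carrier = {w. length w = k \<and> (\<forall>s\<in>set w. length s = n)},
       cr_wt = tens_wt n, cr_e = tens_e n, cr_f = tens_f n \<rparr>"

definition cr_edges :: "nat \<Rightarrow> ('b, 'z) crystal_scheme \<Rightarrow> ('b \<times> 'b) set" where
  "cr_edges n C = {(a, b). a \<in> cr_carrier C \<and> b \<in> cr_carrier C \<and>
      (\<exists>i\<in>{1..n}. cr_e C i a = Some b \<or> cr_f C i a = Some b)}"

definition cr_component :: "nat \<Rightarrow> ('b, 'z) crystal_scheme \<Rightarrow> 'b \<Rightarrow> 'b set" where
  "cr_component n C x = {y. (x, y) \<in> (cr_edges n C \<union> (cr_edges n C)\<inverse>)\<^sup>*}"

definition component_iso ::
  "nat \<Rightarrow> ('b, 'z) crystal_scheme \<Rightarrow> 'b \<Rightarrow> ('c, 'y) crystal_scheme \<Rightarrow> 'c \<Rightarrow> bool" where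
  "component_iso n C x D y \<longleftrightarrow>
     (\<exists>\<phi>. \<phi> x = y \<and> bij_betw \<phi> (cr_component n C x) (cr_component n D y) \<and>
        (\<forall>a\<in>cr_component n C x.
           (\<forall>j\<in>{1..n}. cr_wt D (\<phi> a) j = cr_wt C a j) \<and>
           (\<forall>i\<in>{1..n}. cr_e D i (\<phi> a) = map_option \<phi> (cr_e C i a) \<and>
                       cr_f D i (\<phi> a) = map_option \<phi> (cr_f C i a))))"

text \<open>A crystal (normal crystal): every connected component is isomorphic to a
  connected component of a tensor power of B_S, i.e. to a Kashiwara crystal B_lambda
  (every B_lambda, lambda in P_+, occurs this way).\<close>
definition is_crystal :: "nat \<Rightarrow> ('b, 'z) crystal_scheme \<Rightarrow> bool" where
  "is_crystal n B \<longleftrightarrow>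
     (\<forall>b\<in>cr_carrier B. \<forall>i\<in>{1..n}. \<forall>b'.
        (cr_e B i b = Some b' \<or> cr_f B i b = Some b') \<longrightarrow> b' \<in> cr_carrier B) \<and>
     (\<forall>b\<in>cr_carrier B. \<exists>k y. y \<in> cr_carrier (spinor_tensor_power n k) \<and>
        component_iso n B b (spinor_tensor_power n k) y)"

definition dominant :: "nat \<Rightarrow> (nat \<Rightarrow> rat) \<Rightarrow> bool" where
  "dominant n lam \<longleftrightarrow>
     (\<forall>j\<in>{1..n}. 2 * lam j \<in> \<int>) \<and>
     (\<forall>j\<in>{1..n}. \<forall>k\<in>{1..n}. lam j - lam k \<in> \<int>) \<and>
     (\<forall>j. 1 \<le> j \<and> j < n \<longrightarrow> lam j \<ge> lam (Suc j)) \<and>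
     lam (n - 1) + lam n \<ge> 0"

text \<open>iter_ops g [i_1,...,i_r] b = g_{i_r} ... g_{i_1} b (None = 0).\<close>
definition iter_ops :: "(nat \<Rightarrow> 'b \<Rightarrow> 'b option) \<Rightarrow> nat list \<Rightarrow> 'b \<Rightarrow> 'b option" where
  "iter_ops g idx b = fold (\<lambda>i ob. Option.bind ob (g i)) idx (Some b)"

end

(* Since B_S is minuscule, e_i b_mu <> 0 forces <wt b_mu, alpha_i^vee> = -1, so dominance of
   wt b + wt b_mu gives <wt b, alpha_i^vee> >= 1 and hence f_i b <> 0.  Replacing b by f_i b and
   b_mu by e_i b_mu leaves wt b + wt b_mu unchanged, so the argument iterates along the string.
   That <wt b, alpha_i^vee> > 0 implies f_i b <> 0 is checked in a tensor power of B_S modelling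
   the component of b: there a positive total i-signature leaves an uncancelled +. *)

theory Submission
  imports Defs
begin

text \<open>All roots of \<open>D\<^sub>n\<close> have squared length 2, so \<open>\<langle>\<lambda>, \<alpha>\<^sub>i\<^sup>\<or>\<rangle>\<close> is the inner product
  of \<open>\<lambda>\<close> with \<open>\<alpha>\<^sub>i\<close>; \<open>simple_root n i j\<close> is the \<open>\<epsilon>\<^sub>j\<close>-coordinate of \<open>\<alpha>\<^sub>i\<close>.\<close>

definition coroot_pairing :: "nat \<Rightarrow> nat \<Rightarrow> (nat \<Rightarrow> rat) \<Rightarrow> rat" where
  "coroot_pairing n i lam = (if i < n then lam i - lam (Suc i) else lam (n - 1) + lam n)"

definition simple_root :: "nat \<Rightarrow> nat \<Rightarrow> nat \<Rightarrow> rat" where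
  "simple_root n i j =
     (if i < n then (if j = i then 1 else if j = Suc i then -1 else 0)
      else (if j = n - 1 \<or> j = n then 1 else 0))"

lemma coroot_pairing_cong:
  assumes "2 \<le> n" "i \<in> {1..n}" "\<And>j. j \<in> {1..n} \<Longrightarrow> lam j = lam' j"
  shows "coroot_pairing n i lam = coroot_pairing n i lam'"
  using assms unfolding coroot_pairing_def by auto

lemma coroot_pairing_add:
  "coroot_pairing n i (\<lambda>j. lam j + mu j) = coroot_pairing n i lam + coroot_pairing n i mu"
  unfolding coroot_pairing_def by auto

lemma coroot_pairing_nonneg_if_dominant:
  assumes "dominant n lam" "i \<in> {1..n}"
  shows "0 \<le> coroot_pairing n i lam"
  using assms unfolding dominant_def coroot_pairing_def by auto

lemma coroot_pairing_spin_wt: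
  assumes "2 \<le> n" "length s = n" "i \<in> {1..n}"
  shows "coroot_pairing n i (spin_wt n s) = of_int (spin_sig n i s)"
proof (cases "i < n")
  case True
  then show ?thesis
    using assms unfolding coroot_pairing_def spin_wt_def spin_sig_def spin_e_def spin_f_def
    by (cases "s ! (i - 1)"; cases "s ! i") auto
next
  case False
  then have "i = n" "n - 1 = Suc (n - 2)"
    using assms by auto
  then show ?thesis
    using assms unfolding coroot_pairing_def spin_wt_def spin_sig_def spin_e_def spin_f_def
    by (cases "s ! (n - 2)"; cases "s ! (n - 1)") auto
qed

lemma spin_sig_le_1: "spin_sig n i s \<le> 1"
  unfolding spin_sig_def by auto

lemma spin_f_if_spin_sig_eq_1: "spin_sig n i s = 1 \<Longrightarrow> \<exists>s'. spin_f n i s = Some s'"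
  unfolding spin_sig_def by (auto split: if_splits)

lemma length_spin_e: "spin_e n i s = Some s' \<Longrightarrow> length s' = length s"
  unfolding spin_e_def by (auto split: if_splits)

lemma spin_wt_spin_f:
  assumes "2 \<le> n" "length s = n" "i \<in> {1..n}" "spin_f n i s = Some s'" "j \<in> {1..n}"
  shows "spin_wt n s' j = spin_wt n s j - simple_root n i j"
proof -
  obtain m where "n = Suc (Suc m)" using \<open>2 \<le> n\<close> by (metis add_2_eq_Suc le_Suc_ex)
  then show ?thesis using assms unfolding spin_wt_def spin_f_def simple_root_def
    by (auto simp: nth_list_update split: if_splits)
qed

lemma spin_wt_spin_e:
  assumes "2 \<le> n" "length s = n" "i \<in> {1..n}" "spin_e n i s = Some s'" "j \<in> {1..n}"
  shows "spin_wt n s' j = spin_wt n s j + simple_root n i j"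
proof -
  obtain m where "n = Suc (Suc m)" using \<open>2 \<le> n\<close> by (metis add_2_eq_Suc le_Suc_ex)
  then show ?thesis using assms unfolding spin_wt_def spin_e_def simple_root_def
    by (auto simp: nth_list_update split: if_splits)
qed

lemma coroot_pairing_tens_wt:
  assumes "2 \<le> n" "\<forall>s\<in>set w. length s = n" "i \<in> {1..n}"
  shows "coroot_pairing n i (tens_wt n w) = of_int (\<Sum>m<length w. spin_sig n i (w ! m))"
proof -
  have "coroot_pairing n i (tens_wt n w) = (\<Sum>s\<leftarrow>w. coroot_pairing n i (spin_wt n s))"
    by (induction w) (auto simp: coroot_pairing_def tens_wt_def algebra_simps)
  also have "\<dots> = (\<Sum>s\<leftarrow>w. of_int (spin_sig n i s))"
    using assms by (intro arg_cong[where f = sum_list] map_cong) (auto simp: coroot_pairing_spin_wt)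
  finally show ?thesis
    by (simp add: sum_list_sum_nth atLeast0LessThan)
qed

lemma sum_list_list_update:
  fixes xs :: "'a::ab_group_add list"
  shows "k < length xs \<Longrightarrow> sum_list (xs[k := x]) = sum_list xs + x - xs ! k"
  by (induction xs arbitrary: k) (auto split: nat.split simp: algebra_simps)

lemma tens_wt_list_update:
  assumes "k < length w"
  shows "tens_wt n (w[k := s']) j = tens_wt n w j + spin_wt n s' j - spin_wt n (w ! k) j"
  using assms by (simp add: tens_wt_def map_update sum_list_list_update)

lemma sum_atLeastAtMost_eq_diff_lessThan:
  fixes \<sigma> :: "nat \<Rightarrow> 'a::ab_group_add"
  assumes "j \<le> q"
  shows "(\<Sum>m=j..q. \<sigma> m) = (\<Sum>m<Suc q. \<sigma> m) - (\<Sum>m<j. \<sigma> m)"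
  using sum_diff_nat_ivl[of 0 j "Suc q" \<sigma>] assms
  by (simp add: atLeast0LessThan atLeastLessThanSuc_atLeastAtMost lessThan_Suc_atMost atLeast0AtMost)

lemma exists_unmatched_plus:
  fixes \<sigma> :: "nat \<Rightarrow> int"
  assumes pos: "0 < (\<Sum>m<L. \<sigma> m)" and le_1: "\<And>m. \<sigma> m \<le> 1"
  shows "\<exists>j<L. \<sigma> j = 1 \<and> (\<forall>q. j \<le> q \<and> q < L \<longrightarrow> 0 < (\<Sum>m=j..q. \<sigma> m))"
proof -
  define S where "S p = (\<Sum>m<p. \<sigma> m)" for p
  define A where "A = {p. p \<le> L \<and> S p = Min (S ` {..L})}"
  define j where "j = Max A"
  have "Min (S ` {..L}) \<in> S ` {..L}"
    by (rule Min_in) auto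
  then have "finite A" "A \<noteq> {}"
    unfolding A_def by fastforce+
  then have "j \<in> A" and j_last: "\<And>p. p \<in> A \<Longrightarrow> p \<le> j"
    unfolding j_def by auto
  have S_min: "S j \<le> S p" if "p \<le> L" for p
    using \<open>j \<in> A\<close> that unfolding A_def by simp
  have S_after: "S j < S p" if "j < p" "p \<le> L" for p
  proof -
    have "p \<notin> A"
      using j_last \<open>j < p\<close> by fastforce
    then show ?thesis
      using S_min[OF \<open>p \<le> L\<close>] \<open>j \<in> A\<close> \<open>p \<le> L\<close> unfolding A_def
      by (auto simp: order_less_le)
  qed
  have "j < L"
    using \<open>j \<in> A\<close> S_min[of 0] pos unfolding A_def S_def by (cases "j = L") auto
  have sums: "0 < (\<Sum>m=j..q. \<sigma> m)" if "j \<le> q" "q < L" for q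
    using S_after[of "Suc q"] that
    unfolding sum_atLeastAtMost_eq_diff_lessThan[OF \<open>j \<le> q\<close>] S_def by simp
  with \<open>j < L\<close> have "\<sigma> j = 1"
    using le_1[of j] sums[of j] by simp
  with \<open>j < L\<close> sums show ?thesis by blast
qed

lemma self_in_cr_component: "x \<in> cr_component n C x"
  unfolding cr_component_def by simp

lemma cr_component_eq:
  assumes "x' \<in> cr_component n C x"
  shows "cr_component n C x' = cr_component n C x"
proof -
  let ?R = "cr_edges n C \<union> (cr_edges n C)\<inverse>"
  have "(x, x') \<in> ?R\<^sup>*"
    using assms unfolding cr_component_def by simp
  moreover from rtrancl_converseI[OF this] have "(x', x) \<in> ?R\<^sup>*"
    by (simp add: converse_Un Un_commute)
  ultimately show ?thesis
    unfolding cr_component_def by (auto intro: rtrancl_trans)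
qed

lemma component_iso_wt:
  assumes "component_iso n C x D y" "j \<in> {1..n}"
  shows "cr_wt D y j = cr_wt C x j"
  using assms self_in_cr_component[of x n C] unfolding component_iso_def by metis

lemma component_iso_f:
  assumes iso: "component_iso n C x D y" and "i \<in> {1..n}" and y': "cr_f D i y = Some y'"
    and "x \<in> cr_carrier C" and closed: "\<And>x'. cr_f C i x = Some x' \<Longrightarrow> x' \<in> cr_carrier C"
  shows "\<exists>x'. cr_f C i x = Some x' \<and> component_iso n C x' D y'"
proof -
  obtain \<phi> where "\<phi> x = y" and bij: "bij_betw \<phi> (cr_component n C x) (cr_component n D y)"
    and hom: "\<forall>a\<in>cr_component n C x.
           (\<forall>j\<in>{1..n}. cr_wt D (\<phi> a) j = cr_wt C a j) \<and>
           (\<forall>i\<in>{1..n}. cr_e D i (\<phi> a) = map_option \<phi> (cr_e C i a) \<and>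
                       cr_f D i (\<phi> a) = map_option \<phi> (cr_f C i a))"
    using iso unfolding component_iso_def by blast
  have "map_option \<phi> (cr_f C i x) = Some y'"
    using hom self_in_cr_component[of x n C] \<open>\<phi> x = y\<close> \<open>i \<in> {1..n}\<close> y' by metis
  then obtain x' where x': "cr_f C i x = Some x'" and "\<phi> x' = y'"
    by blast
  have "(x, x') \<in> cr_edges n C"
    unfolding cr_edges_def using \<open>x \<in> cr_carrier C\<close> closed[OF x'] \<open>i \<in> {1..n}\<close> x' by blast
  then have comp_x': "cr_component n C x' = cr_component n C x"
    by (intro cr_component_eq) (auto simp: cr_component_def)
  have "y' \<in> cr_component n D y"
    using bij_betw_apply[OF bij] comp_x' self_in_cr_component[of x' n C] \<open>\<phi> x' = y'\<close> by metis
  then have comp_y': "cr_component n D y' = cr_component n D y"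
    by (rule cr_component_eq)
  show ?thesis
    unfolding component_iso_def using x' \<open>\<phi> x' = y'\<close> bij hom comp_x' comp_y' by auto
qed

lemma tens_f_Some_if_coroot_pairing_pos:
  assumes "2 \<le> n" and len: "\<forall>s\<in>set w. length s = n" and "i \<in> {1..n}"
    and pos: "0 < coroot_pairing n i (tens_wt n w)"
  shows "\<exists>w'. tens_f n i w = Some w' \<and>
           (\<forall>j\<in>{1..n}. tens_wt n w' j = tens_wt n w j - simple_root n i j)"
proof -
  define \<sigma> where "\<sigma> j = spin_sig n i (w ! j)" for j
  define J where "J = {j. j < length w \<and> \<sigma> j = 1 \<and>
                   (\<forall>q. j \<le> q \<and> q < length w \<longrightarrow> 0 < (\<Sum>m=j..q. \<sigma> m))}"
  have "0 < (\<Sum>m<length w. \<sigma> m)"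
    using pos coroot_pairing_tens_wt[OF assms(1-3)] unfolding \<sigma>_def by (metis of_int_0_less_iff)
  then have "J \<noteq> {}"
    using exists_unmatched_plus[of \<sigma>] spin_sig_le_1 unfolding J_def \<sigma>_def by blast
  moreover have "finite J"
    unfolding J_def by simp
  ultimately have "Min J \<in> J"
    by simp
  define k where "k = Min J"
  have "k < length w" "\<sigma> k = 1"
    using \<open>Min J \<in> J\<close> unfolding k_def J_def by auto
  then obtain s' where s': "spin_f n i (w ! k) = Some s'"
    using spin_f_if_spin_sig_eq_1 unfolding \<sigma>_def by blast
  have "tens_f n i w = Some (w[k := s'])"
    using \<open>J \<noteq> {}\<close> s' unfolding tens_f_def J_def \<sigma>_def k_def Let_def by simp
  moreover have "tens_wt n (w[k := s']) j = tens_wt n w j - simple_root n i j"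
    if "j \<in> {1..n}" for j
    using tens_wt_list_update[OF \<open>k < length w\<close>] len \<open>k < length w\<close> that
      spin_wt_spin_f[OF assms(1) _ assms(3) s'] by simp
  ultimately show ?thesis
    by blast
qed

lemma crystal_f_Some_if_coroot_pairing_pos:
  assumes "2 \<le> n" and crystal: "is_crystal n B" and "b \<in> cr_carrier B" and "i \<in> {1..n}"
    and pos: "0 < coroot_pairing n i (cr_wt B b)"
  shows "\<exists>b'. cr_f B i b = Some b' \<and> b' \<in> cr_carrier B \<and>
           (\<forall>j\<in>{1..n}. cr_wt B b' j = cr_wt B b j - simple_root n i j)"
proof -
  obtain k y where y: "y \<in> cr_carrier (spinor_tensor_power n k)"
    and iso: "component_iso n B b (spinor_tensor_power n k) y"
    using crystal \<open>b \<in> cr_carrier B\<close> unfolding is_crystal_def by blast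
  have wt_y: "tens_wt n y j = cr_wt B b j" if "j \<in> {1..n}" for j
    using component_iso_wt[OF iso that] by (simp add: spinor_tensor_power_def)
  have "0 < coroot_pairing n i (tens_wt n y)"
    using pos coroot_pairing_cong[OF assms(1,4) wt_y] by simp
  moreover have "\<forall>s\<in>set y. length s = n"
    using y by (simp add: spinor_tensor_power_def)
  ultimately obtain y' where y': "tens_f n i y = Some y'"
    and wt_y': "\<forall>j\<in>{1..n}. tens_wt n y' j = tens_wt n y j - simple_root n i j"
    using tens_f_Some_if_coroot_pairing_pos[OF assms(1) _ assms(4)] by blast
  have closed: "b' \<in> cr_carrier B" if "cr_f B i b = Some b'" for b'
    using crystal \<open>b \<in> cr_carrier B\<close> \<open>i \<in> {1..n}\<close> that unfolding is_crystal_def by blast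
  obtain b' where b': "cr_f B i b = Some b'"
    and iso': "component_iso n B b' (spinor_tensor_power n k) y'"
    using component_iso_f[OF iso assms(4) _ assms(3) closed] y' by (auto simp: spinor_tensor_power_def)
  have "cr_wt B b' j = cr_wt B b j - simple_root n i j" if "j \<in> {1..n}" for j
    using component_iso_wt[OF iso' that] wt_y' wt_y that by (simp add: spinor_tensor_power_def)
  then show ?thesis
    using b' closed by blast
qed

lemma iter_ops_Nil [simp]: "iter_ops g [] b = Some b"
  by (simp add: iter_ops_def)

lemma iter_ops_Cons [simp]:
  "iter_ops g (i # idx) b = Option.bind (g i b) (iter_ops g idx)"
proof -
  have None: "fold (\<lambda>i ob. Option.bind ob (g i)) idx None = None" for idx
    by (induction idx) auto
  show ?thesis
    unfolding iter_ops_def by (cases "g i b") (auto simp: None)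
qed

lemma crystal_f_string_Some_if_spin_e_string_Some:
  assumes "2 \<le> n" and "is_crystal n B"
  shows "b \<in> cr_carrier B \<Longrightarrow> length s = n \<Longrightarrow>
    \<forall>i\<in>{1..n}. 0 \<le> coroot_pairing n i (\<lambda>j. cr_wt B b j + spin_wt n s j) \<Longrightarrow>
    set idx \<subseteq> {1..n} \<Longrightarrow> iter_ops (spin_e n) idx s \<noteq> None \<Longrightarrow>
    iter_ops (cr_f B) idx b \<noteq> None"
proof (induction idx arbitrary: b s)
  case Nil
  then show ?case by simp
next
  case (Cons i idx)
  have "i \<in> {1..n}"
    using Cons.prems(4) by simp
  from Cons.prems(5) obtain s' where s': "spin_e n i s = Some s'"
    and rest: "iter_ops (spin_e n) idx s' \<noteq> None"
    by (cases "spin_e n i s") auto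
  have "coroot_pairing n i (spin_wt n s) = -1"
    using coroot_pairing_spin_wt[OF assms(1) Cons.prems(2) \<open>i \<in> {1..n}\<close>] s'
    by (simp add: spin_sig_def)
  moreover have "0 \<le> coroot_pairing n i (\<lambda>j. cr_wt B b j + spin_wt n s j)"
    using Cons.prems(3) \<open>i \<in> {1..n}\<close> by blast
  ultimately have "0 < coroot_pairing n i (cr_wt B b)"
    by (simp add: coroot_pairing_add)
  then obtain b' where b': "cr_f B i b = Some b'" "b' \<in> cr_carrier B"
    and wt_b': "\<forall>j\<in>{1..n}. cr_wt B b' j = cr_wt B b j - simple_root n i j"
    using crystal_f_Some_if_coroot_pairing_pos[OF assms \<open>b \<in> cr_carrier B\<close> \<open>i \<in> {1..n}\<close>] by blast
  have wt_sum: "cr_wt B b' j + spin_wt n s' j = cr_wt B b j + spin_wt n s j" if "j \<in> {1..n}" for j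
    using wt_b' spin_wt_spin_e[OF assms(1) Cons.prems(2) \<open>i \<in> {1..n}\<close> s' that] that by simp
  have "\<forall>i\<in>{1..n}. 0 \<le> coroot_pairing n i (\<lambda>j. cr_wt B b' j + spin_wt n s' j)"
    using Cons.prems(3) coroot_pairing_cong[OF assms(1) _ wt_sum] by simp
  moreover have "length s' = n"
    using length_spin_e[OF s'] Cons.prems(2) by simp
  ultimately have "iter_ops (cr_f B) idx b' \<noteq> None"
    using Cons.IH b'(2) Cons.prems(4) rest by simp
  then show ?case
    using b'(1) by simp
qed

theorem corollary4p1:
  fixes n :: nat and B :: "'b crystal" and b :: 'b and bmu :: "bool list" and idx :: "nat list"
  assumes "4 \<le> n"
    and "is_crystal n B"
    and "b \<in> cr_carrier B"
    and "bmu \<in> cr_carrier (spinor_crystal n)"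
    and "dominant n (\<lambda>j. cr_wt B b j + cr_wt (spinor_crystal n) bmu j)"
    and "set idx \<subseteq> {1..n}"
    and "iter_ops (cr_e (spinor_crystal n)) idx bmu \<noteq> None"
  shows "iter_ops (cr_f B) idx b \<noteq> None"
proof -
  have "length bmu = n" "iter_ops (spin_e n) idx bmu \<noteq> None"
    using assms(4,7) by (simp_all add: spinor_crystal_def)
  moreover have "\<forall>i\<in>{1..n}. 0 \<le> coroot_pairing n i (\<lambda>j. cr_wt B b j + spin_wt n bmu j)"
    using coroot_pairing_nonneg_if_dominant assms(5) by (simp add: spinor_crystal_def)
  ultimately show ?thesis
    using crystal_f_string_Some_if_spin_e_string_Some[of n B b bmu idx] assms(1-3,6) by simp
qed

end
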